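(* Let $N>0$ and let $E$ be a set of integers of cardinality at most $2^N$. Then there is a set $B=\{b_i\}_{i\in\mathbb{Z}}$ of integers such that (i) the sets $b_i+E$, $i\in\mathbb{Z}$, are pairwise disjoint; (ii) $b_i\in[i4^{N+1},(i+1)4^{N+1})$ for every $i\in\mathbb{Z}$; and (iii) $\mathbb{Z}=\bigcup_{n=-4^{N+1}}^{4^{N+1}}(n+B)$. *)

theory Defs
  imports Main
begin

end

theory Submission
  imports Defs "HOL-Library.Nat_Bijection"
begin

text \<open>Put \<open>M = 4^(N+1)\<close> and let \<open>D = E - E\<close> be the difference set, so \<open>|D| \<le> 4^N < M/2\<close>.
  The translates \<open>b\<^sub>i + E\<close> are pairwise disjoint iff no difference \<open>b\<^sub>i - b\<^sub>j\<close> lies in \<open>D\<close>.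
  Choose the \<open>b\<^sub>i\<close> greedily along an enumeration of \<open>\<int>\<close>, \<open>b\<^sub>i\<close> in the block \<open>[iM, (i+1)M)\<close>:
  each \<open>d \<in> D\<close> can hit the block \<open>i\<close> only from the two blocks next to \<open>iM - d\<close>, so at most
  \<open>2|D| < M\<close> points of the block are forbidden. Covering is automatic, since every integer
  is within distance \<open>M\<close> of the representative of its block.\<close>

lemma greedy_conflict_free_choice:
  fixes enum :: "nat \<Rightarrow> 'i" and C :: "'i \<Rightarrow> 'a set" and conflict :: "'a \<Rightarrow> 'a \<Rightarrow> bool"
  assumes enum: "bij enum"
    and sym: "\<And>x y. conflict x y \<Longrightarrow> conflict y x"
    and nonempty: "\<And>i. C i \<noteq> {}"
    and extend: "\<And>i f. \<forall>j. f j \<in> C j \<Longrightarrow> \<exists>x \<in> C i. \<forall>j. j \<noteq> i \<longrightarrow> \<not> conflict x (f j)"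
  shows "\<exists>b. (\<forall>i. b i \<in> C i) \<and> (\<forall>i j. i \<noteq> j \<longrightarrow> \<not> conflict (b i) (b j))"
proof -
  define pick where "pick i f = (SOME x. x \<in> C i \<and> (\<forall>j. j \<noteq> i \<longrightarrow> \<not> conflict x (f j)))"
    for i f
  have pick: "pick i f \<in> C i \<and> (\<forall>j. j \<noteq> i \<longrightarrow> \<not> conflict (pick i f) (f j))"
    if "\<forall>j. f j \<in> C j" for i f
  proof -
    have "\<exists>x. x \<in> C i \<and> (\<forall>j. j \<noteq> i \<longrightarrow> \<not> conflict x (f j))"
      using extend[OF that] by blast
    then show ?thesis
      unfolding pick_def by (rule someI_ex)
  qed
  \<comment> \<open>Stage \<open>n\<close> re-chooses the value at \<open>enum n\<close>; the not yet chosen values are placeholders.\<close>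
  define g where "g = rec_nat (\<lambda>j. SOME x. x \<in> C j) (\<lambda>n f. f(enum n := pick (enum n) f))"
  have g_0: "g 0 = (\<lambda>j. SOME x. x \<in> C j)"
    and g_Suc: "g (Suc n) = (g n)(enum n := pick (enum n) (g n))" for n
    by (simp_all add: g_def)
  have g_in: "\<forall>j. g n j \<in> C j" for n
  proof (induction n)
    case 0
    show ?case using nonempty by (simp add: g_0 some_in_eq)
  next
    case (Suc n)
    then show ?case using pick by (simp add: g_Suc)
  qed
  have g_stable: "g n (enum m) = g (Suc m) (enum m)" if "m < n" for m n
    using that
  proof (induction n)
    case (Suc n)
    then show ?case
      using bij_is_inj[OF enum] by (cases "m = n") (auto simp: g_Suc inj_eq)
  qed simp
  define b where "b i = g (Suc (inv enum i)) i" for i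
  have b_in: "b i \<in> C i" for i
    unfolding b_def using g_in by blast
  have b_later: "\<not> conflict (b i) (b j)" if "inv enum j < inv enum i" for i j
  proof -
    have enum_inv: "enum (inv enum k) = k" for k
      using bij_is_surj[OF enum] by (rule surj_f_inv_f)
    have "b j = g (inv enum i) j"
      using g_stable[OF that] by (simp add: b_def enum_inv)
    moreover have "b i = pick i (g (inv enum i))"
      unfolding b_def using g_Suc[of "inv enum i"] by (simp add: enum_inv)
    moreover have "i \<noteq> j"
      using that by blast
    ultimately show ?thesis
      using pick[OF g_in] by metis
  qed
  have "\<not> conflict (b i) (b j)" if "i \<noteq> j" for i j
  proof -
    have "inv enum i \<noteq> inv enum j"
      using that by (metis bij_inv_eq_iff enum)
    then show ?thesis
      using b_later sym by (metis linorder_neqE_nat)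
  qed
  with b_in show ?thesis by blast
qed

definition block :: "int \<Rightarrow> int \<Rightarrow> int set" where
  "block M i = {i * M ..< (i + 1) * M}"

lemma block_nonempty: "M > 0 \<Longrightarrow> i * M \<in> block M i"
  by (simp add: block_def algebra_simps)

lemma card_block: "card (block M i) = nat M"
  by (simp add: block_def algebra_simps)

lemma mem_block_div: "M > 0 \<Longrightarrow> z \<in> block M (z div M)"
  unfolding block_def atLeastLessThan_iff distrib_right
  using div_mult_mod_eq[of z M] pos_mod_bound[of M z] pos_mod_sign[of M z] by linarith

lemma block_index_of_translate:
  fixes M :: int
  assumes M: "M > 0" and x: "x \<in> block M j" and xd: "x + d \<in> block M i"
  shows "j \<in> {(i * M - d) div M, (i * M - d) div M + 1}"
proof -
  define k where "k = (i * M - d) div M"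
  define r where "r = (i * M - d) mod M"
  have div_mod: "i * M - d = k * M + r" "0 \<le> r" "r < M"
    using M by (auto simp: k_def r_def)
  have "j * M \<le> x" "x < (j + 1) * M" "i * M \<le> x + d" "x + d < (i + 1) * M"
    using x xd by (auto simp: block_def)
  then have "j * M < (k + 2) * M" "k * M < (j + 1) * M"
    using div_mod by (simp_all add: algebra_simps)
  then have "j < k + 2" "k < j + 1"
    using M by (simp_all add: mult_less_cancel_right)
  then show ?thesis
    unfolding k_def by auto
qed

lemma exists_in_block_avoiding_translates:
  fixes M :: int
  assumes M: "M > 0" and D: "finite D" and card_D: "2 * int (card D) < M"
    and b: "\<forall>j. b j \<in> block M j"
  shows "\<exists>x \<in> block M i. \<forall>j. x - b j \<notin> D"
proof -
  define F where "F = (\<lambda>(d, t). b ((i * M - d) div M + t) + d) ` (D \<times> {0, 1})"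
  have "finite F"
    unfolding F_def using D by simp
  have "card F \<le> card (D \<times> {0 :: int, 1})"
    unfolding F_def using D by (intro card_image_le) simp
  also have "\<dots> = 2 * card D"
    by (simp add: card_cartesian_product)
  finally have "card F < card (block M i)"
    using card_D by (simp add: card_block)
  then have "\<not> block M i \<subseteq> F"
    using card_mono[OF \<open>finite F\<close>] by (meson not_le)
  then obtain x where x: "x \<in> block M i" "x \<notin> F"
    by blast
  have "x - b j \<notin> D" for j
  proof
    assume d: "x - b j \<in> D"
    have "b j + (x - b j) \<in> block M i"
      using x by simp
    then have "j = (i * M - (x - b j)) div M + 0 \<or> j = (i * M - (x - b j)) div M + 1"
      using block_index_of_translate[OF M b[rule_format]] by simp
    then obtain t :: int where t: "t \<in> {0, 1}" "j = (i * M - (x - b j)) div M + t"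
      by blast
    then have "x = (\<lambda>(d, t). b ((i * M - d) div M + t) + d) (x - b j, t)"
      by simp
    moreover have "(x - b j, t) \<in> D \<times> {0, 1}"
      using d t by simp
    ultimately have "x \<in> F"
      unfolding F_def by (rule image_eqI)
    with x show False
      by simp
  qed
  with x show ?thesis by blast
qed

lemma block_transversal_avoiding:
  fixes M :: int
  assumes D: "finite D" and card_D: "2 * int (card D) < M"
    and sym: "\<And>d. d \<in> D \<Longrightarrow> - d \<in> D"
  shows "\<exists>b. (\<forall>i. b i \<in> block M i) \<and> (\<forall>i j. i \<noteq> j \<longrightarrow> b i - b j \<notin> D)"
proof -
  have M: "M > 0"
    using card_D by linarith
  show ?thesis
  proof (rule greedy_conflict_free_choice[OF bij_int_decode, where conflict = "\<lambda>x y. x - y \<in> D"])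
    show "x - y \<in> D \<Longrightarrow> y - x \<in> D" for x y
      using sym[of "x - y"] by simp
    show "block M i \<noteq> {}" for i
      using block_nonempty[OF M] by blast
    show "\<exists>x \<in> block M i. \<forall>j. j \<noteq> i \<longrightarrow> x - f j \<notin> D" if "\<forall>j. f j \<in> block M j" for i f
      using exists_in_block_avoiding_translates[OF M D card_D that] by blast
  qed
qed

lemma translates_of_block_transversal_cover:
  fixes M :: int
  assumes M: "M > 0" and b: "\<forall>i. b i \<in> block M i"
  shows "UNIV = (\<Union>n \<in> {-M..M}. (\<lambda>x. n + x) ` range b)"
proof -
  have "z \<in> (\<lambda>x. (z - b (z div M)) + x) ` range b" and "z - b (z div M) \<in> {-M..M}" for z
    using mem_block_div[OF M, of z] b[rule_format, of "z div M"]
    by (auto simp: block_def algebra_simps)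
  then show ?thesis by blast
qed

definition difference_set :: "'a :: ab_group_add set \<Rightarrow> 'a set" where
  "difference_set E = (\<lambda>(x, y). x - y) ` (E \<times> E)"

lemma finite_difference_set: "finite E \<Longrightarrow> finite (difference_set E)"
  by (simp add: difference_set_def)

lemma card_difference_set_le: "finite E \<Longrightarrow> card (difference_set E) \<le> card E ^ 2"
  unfolding difference_set_def power2_eq_square
  by (metis card_cartesian_product card_image_le finite_cartesian_product)

lemma uminus_mem_difference_set: "d \<in> difference_set E \<Longrightarrow> - d \<in> difference_set E"
  by (force simp: difference_set_def)

lemma disjoint_translates_iff:
  "((\<lambda>e. a + e) ` E) \<inter> ((\<lambda>e. c + e) ` E) = {} \<longleftrightarrow> a - c \<notin> difference_set E"
  by (force simp: difference_set_def algebra_simps)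

lemma double_card_difference_set_less:
  assumes "finite E" and "card E \<le> 2 ^ N"
  shows "2 * int (card (difference_set E)) < 4 ^ (N + 1)"
proof -
  have "card (difference_set E) \<le> (2 ^ N) ^ 2"
    using card_difference_set_le[OF \<open>finite E\<close>] \<open>card E \<le> 2 ^ N\<close>
    by (meson order_trans power_mono zero_le)
  also have "(2 ^ N) ^ 2 = (4 :: nat) ^ N"
    by (metis mult.commute power_mult num_double numeral_times_numeral power2_eq_square)
  finally have "int (card (difference_set E)) \<le> 4 ^ N"
    by (metis of_nat_le_iff of_nat_numeral of_nat_power)
  moreover have "(0 :: int) < 4 ^ N" and "(4 :: int) ^ (N + 1) = 4 * 4 ^ N"
    by simp_all
  ultimately show ?thesis
    by linarith
qed

theorem lemma3p1:
  fixes N :: nat and E :: "int set"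
  assumes "N > 0"
    and "finite E" and "card E \<le> 2 ^ N"
  shows "\<exists>b :: int \<Rightarrow> int.
     (\<forall>i j. i \<noteq> j \<longrightarrow> ((\<lambda>e. b i + e) ` E) \<inter> ((\<lambda>e. b j + e) ` E) = {}) \<and>
     (\<forall>i. i * 4 ^ (N + 1) \<le> b i \<and> b i < (i + 1) * 4 ^ (N + 1)) \<and>
     (UNIV :: int set) = (\<Union>n \<in> {- (4 ^ (N + 1)) .. 4 ^ (N + 1)}. (\<lambda>x. n + x) ` range b)"
proof -
  define M :: int where "M = 4 ^ (N + 1)"
  have "2 * int (card (difference_set E)) < M"
    unfolding M_def using assms(2,3) by (rule double_card_difference_set_less)
  then obtain b where blocks: "\<forall>i. b i \<in> block M i"
    and separated: "\<forall>i j. i \<noteq> j \<longrightarrow> b i - b j \<notin> difference_set E"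
    using block_transversal_avoiding finite_difference_set[OF \<open>finite E\<close>]
      uminus_mem_difference_set by metis
  have "M > 0"
    by (simp add: M_def)
  show ?thesis
  proof (intro exI conjI)
    show "\<forall>i j. i \<noteq> j \<longrightarrow> ((\<lambda>e. b i + e) ` E) \<inter> ((\<lambda>e. b j + e) ` E) = {}"
      using separated by (simp add: disjoint_translates_iff)
    show "\<forall>i. i * 4 ^ (N + 1) \<le> b i \<and> b i < (i + 1) * 4 ^ (N + 1)"
      using blocks by (simp add: block_def M_def)
    show "UNIV = (\<Union>n \<in> {- (4 ^ (N + 1)) .. 4 ^ (N + 1)}. (\<lambda>x. n + x) ` range b)"
      using translates_of_block_transversal_cover[OF \<open>M > 0\<close> blocks] by (simp add: M_def)
  qed
qed

end
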